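(* Suppose $D\subset\mathbb{R}^d$ is a $\kappa$-fat open set with localization constant $R_0$ and $\dim_{\rm A}(\partial D)<d$, and let $\gamma:=d-\dim_{\rm A}(\partial D)$. For any $q\in[0,\gamma)$ there exists $C=C(q)>0$ such that $$m_d\big(\{y\in B(x,r)\cap\overline D:\delta_D(y)<s\}\big)\le Cs^q(s\vee r)^{d-q}\quad\text{for all }x\in\overline D\text{ and }r,s>0.$$
   Context: $m_d$ is $d$-dimensional Lebesgue measure; $\delta_D(x)=\mathrm{dist}(x,\partial D)$. For nonempty $E\subset\mathbb{R}^d$, $\dim_{\rm A}(E)$ is the infimum of all $\lambda>0$ for which there is $C$ such that for all $x\in E$ and $0<s\le r<\mathrm{diam}(E)$, $B(x,r)\cap E$ can be covered by at most $C(r/s)^\lambda$ open balls of radius $s$ centered in $E$. For $\kappa\in(0,1)$, $D$ open is $\kappa$-fat with localization constant $R_0\in(0,\mathrm{diam}(D)]$ if for every $x\in\overline D$ and $r\in(0,R_0)$ there is $z\in D$ with $B(z,\kappa r)\subset D\cap B(x,r)$. *)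

theory Defs
  imports "HOL-Analysis.Analysis"
begin

text \<open>Covering condition in the definition of the Assouad dimension: there is C such
  that for all x in E and 0 < s <= r < diam E, the set B(x,r) \<inter> E can be covered by at most
  C (r/s)^lambda open balls of radius s centred in E.  (For unbounded E, diam E = infinity,
  so the restriction r < diam E is void.)\<close>
definition assouad_cover :: "'a::metric_space set \<Rightarrow> real \<Rightarrow> bool" where
  "assouad_cover E lam \<longleftrightarrow>
     (\<exists>C. \<forall>x\<in>E. \<forall>s r. 0 < s \<and> s \<le> r \<and> (bounded E \<longrightarrow> r < diameter E) \<longrightarrow>
        (\<exists>F. finite F \<and> F \<subseteq> E \<and> ball x r \<inter> E \<subseteq> (\<Union>y\<in>F. ball y s) \<and>
             real (card F) \<le> C * (r / s) powr lam))"

definition assouad_dim :: "'a::metric_space set \<Rightarrow> real" where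
  "assouad_dim E = Inf {lam. lam > 0 \<and> assouad_cover E lam}"

definition kappa_fat :: "real \<Rightarrow> real \<Rightarrow> 'a::euclidean_space set \<Rightarrow> bool" where
  "kappa_fat \<kappa> R0 D \<longleftrightarrow> open D \<and> 0 < \<kappa> \<and> \<kappa> < 1 \<and> 0 < R0 \<and>
     (bounded D \<longrightarrow> R0 \<le> diameter D) \<and>
     (\<forall>x\<in>closure D. \<forall>r. 0 < r \<and> r < R0 \<longrightarrow>
        (\<exists>z\<in>D. ball z (\<kappa> * r) \<subseteq> D \<inter> ball x r))"

end

(* Fix lam with dim_A(bd D) < lam < d - q and put m = max s r.  The Assouad covering condition,
   extended to all scales, covers bd D inside a ball of radius 4m by at most C (m/s)^lam balls
   of radius s centred on bd D; with radius 2s the same balls cover every point of B(x, r)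
   within distance s of bd D.  Each has volume of order s^d, and lam <= d - q gives
   (m/s)^lam s^d <= s^q m^(d - q). *)

theory Submission
  imports Defs
begin

definition coverable_by_balls :: "'a::metric_space set \<Rightarrow> real \<Rightarrow> real \<Rightarrow> 'a set \<Rightarrow> bool" where
  "coverable_by_balls E s N A \<longleftrightarrow>
     (\<exists>F. finite F \<and> F \<subseteq> E \<and> A \<subseteq> (\<Union>y\<in>F. ball y s) \<and> real (card F) \<le> N)"

lemma assouad_cover_iff:
  "assouad_cover E lam \<longleftrightarrow>
     (\<exists>C. \<forall>x\<in>E. \<forall>s r. 0 < s \<and> s \<le> r \<and> (bounded E \<longrightarrow> r < diameter E) \<longrightarrow>
        coverable_by_balls E s (C * (r / s) powr lam) (ball x r \<inter> E))"
  unfolding assouad_cover_def coverable_by_balls_def ..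

lemma coverable_by_balls_mono:
  assumes "coverable_by_balls E s N A" "A' \<subseteq> A" "s \<le> s'" "N \<le> N'"
  shows "coverable_by_balls E s' N' A'"
proof -
  obtain F where F: "finite F" "F \<subseteq> E" "A \<subseteq> (\<Union>y\<in>F. ball y s)" "real (card F) \<le> N"
    using assms(1) unfolding coverable_by_balls_def by blast
  have "(\<Union>y\<in>F. ball y s) \<subseteq> (\<Union>y\<in>F. ball y s')"
    using assms(3) by (intro UN_mono) auto
  then have "A' \<subseteq> (\<Union>y\<in>F. ball y s')"
    using F(3) assms(2) by blast
  then show ?thesis
    unfolding coverable_by_balls_def using F assms(4) by (intro exI[of _ F]) auto
qed

lemma coverable_by_balls_refine:
  assumes "coverable_by_balls E t M A" "A \<subseteq> E" "0 \<le> N"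
    and fine: "\<And>u. u \<in> E \<Longrightarrow> coverable_by_balls E s N (ball u t \<inter> E)"
  shows "coverable_by_balls E s (M * N) A"
proof -
  obtain F where F: "finite F" "F \<subseteq> E" "A \<subseteq> (\<Union>u\<in>F. ball u t)" "real (card F) \<le> M"
    using assms(1) unfolding coverable_by_balls_def by blast
  have "\<forall>u\<in>F. \<exists>G. finite G \<and> G \<subseteq> E \<and> ball u t \<inter> E \<subseteq> (\<Union>y\<in>G. ball y s) \<and> real (card G) \<le> N"
    using fine F(2) unfolding coverable_by_balls_def by (simp add: subset_iff)
  then obtain G where G: "\<forall>u\<in>F. finite (G u) \<and> G u \<subseteq> E \<and>
      ball u t \<inter> E \<subseteq> (\<Union>y\<in>G u. ball y s) \<and> real (card (G u)) \<le> N"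
    by (rule bchoice[elim_format]) blast
  have "A \<subseteq> (\<Union>y\<in>(\<Union>u\<in>F. G u). ball y s)"
  proof
    fix a assume "a \<in> A"
    then obtain u where "u \<in> F" "a \<in> ball u t" "a \<in> E" using F(3) assms(2) by blast
    then show "a \<in> (\<Union>y\<in>(\<Union>u\<in>F. G u). ball y s)" using G by blast
  qed
  moreover have "real (card (\<Union>u\<in>F. G u)) \<le> M * N"
  proof -
    have "real (card (\<Union>u\<in>F. G u)) \<le> (\<Sum>u\<in>F. real (card (G u)))"
      using card_UN_le[OF F(1), of G] by (simp flip: of_nat_sum)
    also have "\<dots> \<le> real (card F) * N"
      using sum_mono[of F "\<lambda>u. real (card (G u))" "\<lambda>_. N"] G by simp
    also have "\<dots> \<le> M * N"
      using F(4) assms(3) by (rule mult_right_mono)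
    finally show ?thesis .
  qed
  moreover have "finite (\<Union>u\<in>F. G u)" "(\<Union>u\<in>F. G u) \<subseteq> E"
    using F(1) G by auto
  ultimately show ?thesis
    unfolding coverable_by_balls_def by blast
qed

lemma card_separated_subset_ball_le:
  fixes x :: "'a::euclidean_space"
  assumes "finite F" "F \<subseteq> ball x r" "0 \<le> r" "0 < s"
    and sep: "\<And>a b. a \<in> F \<Longrightarrow> b \<in> F \<Longrightarrow> a \<noteq> b \<Longrightarrow> s \<le> dist a b"
  shows "real (card F) * (s/2) ^ DIM('a) \<le> (r + s/2) ^ DIM('a)"
proof -
  have disj: "pairwise (\<lambda>a b. disjnt (ball a (s/2)) (ball b (s/2))) F"
  proof (rule pairwiseI)
    fix a b assume "a \<in> F" "b \<in> F" "a \<noteq> b"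
    then have "s \<le> dist a b" by (rule sep)
    then show "disjnt (ball a (s/2)) (ball b (s/2))"
      unfolding disjnt_iff mem_ball using dist_triangle_half_l[of a _ s b] by (auto simp: dist_commute)
  qed
  have sub: "(\<Union>a\<in>F. ball a (s/2)) \<subseteq> ball x (r + s/2)"
  proof
    fix z assume "z \<in> (\<Union>a\<in>F. ball a (s/2))"
    then obtain a where "a \<in> F" "dist a z < s/2" by auto
    moreover have "dist x z \<le> dist x a + dist a z" by (rule dist_triangle)
    ultimately show "z \<in> ball x (r + s/2)" using assms(2) by force
  qed
  have "real (card F) * (unit_ball_vol DIM('a) * (s/2) ^ DIM('a))
      = measure lebesgue (\<Union>a\<in>F. ball a (s/2))"
    using assms(4) by (simp add: measure_UNION'[OF assms(1) _ disj] content_ball)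
  also have "\<dots> \<le> measure lebesgue (ball x (r + s/2))"
    using sub assms(1) by (intro measure_mono_fmeasurable) auto
  also have "\<dots> = unit_ball_vol DIM('a) * (r + s/2) ^ DIM('a)"
    using assms(3,4) by (simp add: content_ball)
  finally show ?thesis by simp
qed

(* A maximal s-separated subset of B(x, r) \<inter> E is an s-net, and the disjoint balls of
   radius s/2 around its points lie in B(x, 3r/2). *)
lemma coverable_by_balls_euclidean:
  fixes E :: "'a::euclidean_space set"
  assumes "0 < s" "s \<le> r"
  shows "coverable_by_balls E s ((3 * r / s) ^ DIM('a)) (ball x r \<inter> E)"
proof -
  define separated where "separated F \<longleftrightarrow> finite F \<and> F \<subseteq> ball x r \<inter> E \<and>
      (\<forall>a\<in>F. \<forall>b\<in>F. a \<noteq> b \<longrightarrow> s \<le> dist a b)" for F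
  have card_le: "real (card F) \<le> (3 * r / s) ^ DIM('a)" if "separated F" for F
  proof -
    have "real (card F) * (s/2) ^ DIM('a) \<le> (r + s/2) ^ DIM('a)"
      using that assms unfolding separated_def by (intro card_separated_subset_ball_le) auto
    also have "\<dots> \<le> (3 * r / s) ^ DIM('a) * (s/2) ^ DIM('a)"
      using assms by (simp flip: power_mult_distrib add: power_mono)
    finally show ?thesis using assms(1) by simp
  qed
  have "card F < nat \<lceil>(3 * r / s) ^ DIM('a)\<rceil> + 1" if "separated F" for F
    using card_le[OF that] real_nat_ceiling_ge[of "(3 * r / s) ^ DIM('a)"] by linarith
  moreover have "separated {}" unfolding separated_def by simp
  ultimately obtain F where F: "separated F" and maximal: "\<And>G. separated G \<Longrightarrow> card G \<le> card F"
    using ex_has_greatest_nat[of separated "{}" card] by blast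
  have "ball x r \<inter> E \<subseteq> (\<Union>y\<in>F. ball y s)"
  proof
    fix a assume a: "a \<in> ball x r \<inter> E"
    show "a \<in> (\<Union>y\<in>F. ball y s)"
    proof (rule ccontr)
      assume far: "a \<notin> (\<Union>y\<in>F. ball y s)"
      then have "a \<notin> F" using assms(1) by force
      have "separated (insert a F)"
        using F a far unfolding separated_def by (auto simp: dist_commute not_less)
      then have "card (insert a F) \<le> card F" by (rule maximal)
      with \<open>a \<notin> F\<close> F show False unfolding separated_def by simp
    qed
  qed
  then show ?thesis
    using F card_le[OF F] unfolding separated_def coverable_by_balls_def by blast
qed

lemma assouad_cover_DIM: "assouad_cover (E :: 'a::euclidean_space set) DIM('a)"
  unfolding assouad_cover_iff
proof (intro exI[of _ "3 ^ DIM('a)"] ballI allI impI)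
  fix x and s r :: real assume "0 < s \<and> s \<le> r \<and> (bounded E \<longrightarrow> r < diameter E)"
  then have "(3 * r / s) ^ DIM('a) = 3 ^ DIM('a) * (r / s) powr DIM('a)"
    by (simp add: powr_realpow flip: power_mult_distrib)
  then show "coverable_by_balls E s (3 ^ DIM('a) * (r / s) powr DIM('a)) (ball x r \<inter> E)"
    using coverable_by_balls_euclidean \<open>0 < s \<and> s \<le> r \<and> _\<close> by metis
qed

lemma assouad_dim_lessE:
  fixes E :: "'a::euclidean_space set"
  assumes "assouad_dim E < t"
  obtains lam where "0 < lam" "lam < t" "assouad_cover E lam"
proof -
  have "real DIM('a) \<in> {lam. lam > 0 \<and> assouad_cover E lam}"
    using assouad_cover_DIM by simp
  then have "{lam. lam > 0 \<and> assouad_cover E lam} \<noteq> {}" by blast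
  then have "\<exists>lam\<in>{lam. lam > 0 \<and> assouad_cover E lam}. lam < t"
    using assms unfolding assouad_dim_def by (rule cInf_lessD)
  then show ?thesis using that by blast
qed

(* The Assouad condition only constrains scales below diam E.  Above it, E is covered by 9^d
   balls of radius diam E / 2, each refined at scale s/2 -- or by the single ball B(w, s)
   once s exceeds diam E. *)
lemma coverable_by_balls_bounded:
  fixes E :: "'a::euclidean_space set"
  assumes "bounded E" "w \<in> E" "0 < s" "0 \<le> C"
    and small: "\<And>x s' r. x \<in> E \<Longrightarrow> 0 < s' \<Longrightarrow> s' \<le> r \<Longrightarrow> r < diameter E \<Longrightarrow>
      coverable_by_balls E s' (C * (r / s') powr lam) (ball x r \<inter> E)"
  shows "coverable_by_balls E s (max 1 (9 ^ DIM('a) * C * (diameter E / s) powr lam)) E"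
proof (cases "diameter E < s")
  case True
  have "E \<subseteq> ball w s"
    using diameter_bounded_bound[OF assms(1,2)] True by force
  then show ?thesis
    unfolding coverable_by_balls_def using assms(2) by (intro exI[of _ "{w}"]) auto
next
  case False
  define t where "t = diameter E / 2"
  have t: "0 < t" "t < diameter E" "s / 2 \<le> t"
    using False assms(3) unfolding t_def by auto
  have "E \<subseteq> ball w (3 * t)"
    using diameter_bounded_bound[OF assms(1,2)] t unfolding t_def by force
  then have coarse: "coverable_by_balls E t (9 ^ DIM('a)) E"
    using coverable_by_balls_euclidean[of t "3 * t" E w] t by (simp add: Int_absorb1)
  have fine: "coverable_by_balls E (s / 2) (C * (diameter E / s) powr lam) (ball u t \<inter> E)"
    if "u \<in> E" for u
    using small[OF that, of "s / 2" t] t assms(3) unfolding t_def by simp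
  have "coverable_by_balls E (s / 2) (9 ^ DIM('a) * (C * (diameter E / s) powr lam)) E"
    using coverable_by_balls_refine[OF coarse _ _ fine] assms(4) by simp
  then show ?thesis
    by (rule coverable_by_balls_mono) (use assms(3) in \<open>auto simp: mult.assoc\<close>)
qed

lemma assouad_cover_all_scales:
  fixes E :: "'a::euclidean_space set"
  assumes "assouad_cover E lam" "0 \<le> lam"
  obtains C where "0 < C"
    "\<And>w s \<rho>. w \<in> E \<Longrightarrow> 0 < s \<Longrightarrow> s \<le> \<rho> \<Longrightarrow>
      coverable_by_balls E s (C * (\<rho> / s) powr lam) (ball w \<rho> \<inter> E)"
proof -
  obtain C0 where C0: "\<And>x s r. x \<in> E \<Longrightarrow> 0 < s \<Longrightarrow> s \<le> r \<Longrightarrow> (bounded E \<longrightarrow> r < diameter E) \<Longrightarrow>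
      coverable_by_balls E s (C0 * (r / s) powr lam) (ball x r \<inter> E)"
    using assms(1) unfolding assouad_cover_iff by blast
  define C where "C = max C0 1"
  have "1 \<le> C" unfolding C_def by simp
  then have "1 \<le> 9 ^ DIM('a) * C" using mult_mono[of 1 "9 ^ DIM('a)" 1 C] by simp
  have small: "coverable_by_balls E s (C * (r / s) powr lam) (ball x r \<inter> E)"
    if "x \<in> E" "0 < s" "s \<le> r" "bounded E \<longrightarrow> r < diameter E" for x s r
    by (rule coverable_by_balls_mono[OF C0[OF that]]) (auto simp: C_def intro!: mult_right_mono)
  have "coverable_by_balls E s (9 ^ DIM('a) * C * (\<rho> / s) powr lam) (ball w \<rho> \<inter> E)"
    if "w \<in> E" "0 < s" "s \<le> \<rho>" for w s \<rho>
  proof (cases "bounded E \<longrightarrow> \<rho> < diameter E")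
    case True
    have "C \<le> 9 ^ DIM('a) * C" using \<open>1 \<le> C\<close> by (simp add: mult_le_cancel_right1)
    then show ?thesis
      by (intro coverable_by_balls_mono[OF small[OF that True]] mult_right_mono) auto
  next
    case False
    then have bounded: "bounded E" and "diameter E \<le> \<rho>" by auto
    have "1 \<le> (\<rho> / s) powr lam" using that assms(2) by (simp add: ge_one_powr_ge_zero)
    moreover have "(diameter E / s) powr lam \<le> (\<rho> / s) powr lam"
      using \<open>diameter E \<le> \<rho>\<close> that assms(2) diameter_ge_0[OF bounded]
      by (intro powr_mono2 divide_right_mono) auto
    ultimately have "1 \<le> 9 ^ DIM('a) * C * (\<rho> / s) powr lam"
      "9 ^ DIM('a) * C * (diameter E / s) powr lam \<le> 9 ^ DIM('a) * C * (\<rho> / s) powr lam"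
      using \<open>1 \<le> C\<close> \<open>1 \<le> 9 ^ DIM('a) * C\<close> mult_mono[of 1 "9 ^ DIM('a) * C" 1 "(\<rho> / s) powr lam"]
      by (auto intro: mult_left_mono)
    then have "max 1 (9 ^ DIM('a) * C * (diameter E / s) powr lam) \<le> 9 ^ DIM('a) * C * (\<rho> / s) powr lam"
      by simp
    moreover have "coverable_by_balls E s (max 1 (9 ^ DIM('a) * C * (diameter E / s) powr lam)) E"
      using small that unfolding C_def
      by (intro coverable_by_balls_bounded[OF bounded \<open>w \<in> E\<close> \<open>0 < s\<close>]) auto
    ultimately show ?thesis
      by (elim coverable_by_balls_mono) auto
  qed
  moreover have "0 < 9 ^ DIM('a) * C" using \<open>1 \<le> 9 ^ DIM('a) * C\<close> by linarith
  ultimately show thesis using that by blast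
qed

lemma emeasure_le_coverable_by_balls:
  fixes A E :: "'a::euclidean_space set"
  assumes "coverable_by_balls E r N A" "0 \<le> r"
  shows "emeasure lebesgue A \<le> ennreal (N * unit_ball_vol DIM('a) * r ^ DIM('a))"
proof -
  obtain F where F: "finite F" "A \<subseteq> (\<Union>y\<in>F. ball y r)" "real (card F) \<le> N"
    using assms(1) unfolding coverable_by_balls_def by blast
  have "emeasure lebesgue A \<le> emeasure lebesgue (\<Union>y\<in>F. ball y r)"
    using F(1,2) by (intro emeasure_mono) auto
  also have "\<dots> \<le> (\<Sum>y\<in>F. emeasure lebesgue (ball y r))"
    using F(1) by (intro emeasure_subadditive_finite) auto
  also have "\<dots> = ennreal (real (card F) * (unit_ball_vol DIM('a) * r ^ DIM('a)))"
    using assms(2) by (simp add: emeasure_ball ennreal_of_nat_eq_real_of_nat flip: ennreal_mult)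
  also have "\<dots> \<le> ennreal (N * unit_ball_vol DIM('a) * r ^ DIM('a))"
  proof (rule ennreal_leI)
    have "0 \<le> unit_ball_vol DIM('a) * r ^ DIM('a)" using assms(2) by simp
    with F(3) show "real (card F) * (unit_ball_vol DIM('a) * r ^ DIM('a))
        \<le> N * unit_ball_vol DIM('a) * r ^ DIM('a)"
      unfolding mult.assoc by (rule mult_right_mono)
  qed
  finally show ?thesis .
qed

lemma infdist_lessE:
  assumes "infdist x A < e" "A \<noteq> {}"
  obtains a where "a \<in> A" "dist x a < e"
proof -
  have "Inf (dist x ` A) < e"
    using assms(1) unfolding infdist_notempty[OF assms(2)] .
  moreover have "dist x ` A \<noteq> {}" using assms(2) by simp
  ultimately have "\<exists>d\<in>dist x ` A. d < e" by (intro cInf_lessD)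
  then show thesis using that by auto
qed

lemma infdist_sublevel_coverable_by_balls:
  assumes "coverable_by_balls E s N (ball z \<rho> \<inter> E)" "E \<noteq> {}"
    and "dist x z < r + s" "2 * (r + s) \<le> \<rho>"
  shows "coverable_by_balls E (2 * s) N {y \<in> ball x r. infdist y E < s}"
proof -
  obtain F where F: "finite F" "F \<subseteq> E" "ball z \<rho> \<inter> E \<subseteq> (\<Union>u\<in>F. ball u s)" "real (card F) \<le> N"
    using assms(1) unfolding coverable_by_balls_def by blast
  have "y \<in> (\<Union>u\<in>F. ball u (2 * s))" if y: "dist x y < r" "infdist y E < s" for y
  proof -
    obtain a where a: "a \<in> E" "dist y a < s" using infdist_lessE[OF y(2) assms(2)] .
    have "dist z a \<le> dist x z + dist x y + dist y a"
      using dist_triangle[of z a x] dist_triangle[of x a y] dist_commute[of z x] by linarith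
    then have "a \<in> ball z \<rho> \<inter> E"
      using a y(1) assms(3,4) by simp
    then have "a \<in> (\<Union>u\<in>F. ball u s)" by (rule subsetD[OF F(3)])
    then obtain u where "u \<in> F" "dist u a < s" by auto
    moreover have "dist u y \<le> dist u a + dist y a" by (rule dist_triangle2)
    ultimately have "dist u y < 2 * s" using a(2) by linarith
    with \<open>u \<in> F\<close> show ?thesis by auto
  qed
  then have "{y \<in> ball x r. infdist y E < s} \<subseteq> (\<Union>u\<in>F. ball u (2 * s))" by auto
  then show ?thesis
    unfolding coverable_by_balls_def using F(1,2,4) by (intro exI[of _ F] conjI)
qed

lemma powr_ratio_mult_powr_le:
  fixes s m lam q d :: real
  assumes "0 < s" "s \<le> m" "lam + q \<le> d"
  shows "(m / s) powr lam * s powr d \<le> s powr q * m powr (d - q)"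
proof -
  have "s powr d = s powr lam * (s powr q * s powr (d - lam - q))"
    by (simp flip: powr_add)
  moreover have "(m / s) powr lam = m powr lam / s powr lam"
    using assms(1,2) by (simp add: powr_divide)
  ultimately have "(m / s) powr lam * s powr d = m powr lam * s powr q * s powr (d - lam - q)"
    using assms(1) by simp
  also have "\<dots> \<le> m powr lam * s powr q * m powr (d - lam - q)"
    using assms by (intro mult_left_mono powr_mono2) auto
  also have "\<dots> = s powr q * (m powr lam * m powr (d - lam - q))"
    by (simp only: mult_ac)
  also have "\<dots> = s powr q * m powr (d - q)"
    by (simp flip: powr_add)
  finally show ?thesis .
qed

lemma emeasure_infdist_sublevel_le:
  fixes E A :: "'a::euclidean_space set" and C lam q :: real
  assumes cover: "\<And>w s \<rho>. w \<in> E \<Longrightarrow> 0 < s \<Longrightarrow> s \<le> \<rho> \<Longrightarrow>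
      coverable_by_balls E s (C * (\<rho> / s) powr lam) (ball w \<rho> \<inter> E)"
    and "E \<noteq> {}" "A \<subseteq> {y \<in> ball x r. infdist y E < s}"
    and "0 \<le> C" "0 < r" "0 < s" "lam + q \<le> real DIM('a)"
  shows "emeasure lebesgue A \<le> ennreal (C * 4 powr lam * 2 ^ DIM('a) * unit_ball_vol DIM('a) *
    (s powr q * max s r powr (real DIM('a) - q)))"
proof (cases "A = {}")
  case False
  then obtain y where "y \<in> A" by blast
  then have "dist x y < r" "infdist y E < s" using assms(3) by auto
  obtain z where "z \<in> E" "dist y z < s" by (rule infdist_lessE[OF \<open>infdist y E < s\<close> assms(2)])
  define m where "m = max s r"
  have "dist x z < r + s" using dist_triangle[of x z y] \<open>dist x y < r\<close> \<open>dist y z < s\<close> by linarith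
  moreover have "2 * (r + s) \<le> 4 * m" unfolding m_def by (auto simp: max_def)
  ultimately have "coverable_by_balls E (2 * s) (C * (4 * m / s) powr lam) {y \<in> ball x r. infdist y E < s}"
    using cover[OF \<open>z \<in> E\<close>, of s "4 * m"] assms(2,5,6) unfolding m_def
    by (intro infdist_sublevel_coverable_by_balls) auto
  then have "coverable_by_balls E (2 * s) (C * (4 * m / s) powr lam) A"
    using assms(3) by (rule coverable_by_balls_mono) auto
  then have "emeasure lebesgue A
      \<le> ennreal (C * (4 * m / s) powr lam * unit_ball_vol DIM('a) * (2 * s) ^ DIM('a))"
    using assms(6) by (intro emeasure_le_coverable_by_balls) auto
  also have "\<dots> = ennreal (C * 4 powr lam * 2 ^ DIM('a) * unit_ball_vol DIM('a) *
      ((m / s) powr lam * s powr real DIM('a)))"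
  proof -
    have "(4 * m / s) powr lam = 4 powr lam * (m / s) powr lam"
      using assms(6) unfolding m_def by (simp add: powr_mult flip: times_divide_eq_right)
    then show ?thesis
      using assms(6) by (simp add: powr_realpow power_mult_distrib mult_ac)
  qed
  also have "\<dots> \<le> ennreal (C * 4 powr lam * 2 ^ DIM('a) * unit_ball_vol DIM('a) *
      (s powr q * m powr (real DIM('a) - q)))"
    using assms(4,6,7) powr_ratio_mult_powr_le[of s m lam q "real DIM('a)"]
    unfolding m_def by (intro ennreal_leI mult_left_mono) auto
  finally show ?thesis unfolding m_def .
qed (simp only: emeasure_empty zero_le)

theorem proposition2p4:
  fixes D :: "'a::euclidean_space set" and \<kappa> R0 q :: real
  assumes fat: "kappa_fat \<kappa> R0 D"
    and ne: "frontier D \<noteq> {}"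
    and dimA: "assouad_dim (frontier D) < real DIM('a)"
    and q: "0 \<le> q" "q < real DIM('a) - assouad_dim (frontier D)"
  shows "\<exists>C>0. \<forall>x\<in>closure D. \<forall>r s. 0 < r \<and> 0 < s \<longrightarrow>
           emeasure lebesgue {y \<in> ball x r \<inter> closure D. infdist y (frontier D) < s}
             \<le> ennreal (C * s powr q * (max s r) powr (real DIM('a) - q))"
proof -
  have "assouad_dim (frontier D) < real DIM('a) - q" using q(2) by linarith
  then obtain lam where lam: "0 < lam" "lam < real DIM('a) - q" "assouad_cover (frontier D) lam"
    by (rule assouad_dim_lessE)
  obtain C where "0 < C" and cover: "\<And>w s \<rho>. w \<in> frontier D \<Longrightarrow> 0 < s \<Longrightarrow> s \<le> \<rho> \<Longrightarrow>
      coverable_by_balls (frontier D) s (C * (\<rho> / s) powr lam) (ball w \<rho> \<inter> frontier D)"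
    using assouad_cover_all_scales[OF lam(3)] lam(1) by auto
  define K where "K = C * 4 powr lam * 2 ^ DIM('a) * unit_ball_vol DIM('a)"
  have "0 < K" unfolding K_def using \<open>0 < C\<close> by simp
  have bound: "emeasure lebesgue {y \<in> ball x r \<inter> closure D. infdist y (frontier D) < s}
      \<le> ennreal (K * (s powr q * (max s r) powr (real DIM('a) - q)))" if "0 < r" "0 < s" for x r s
    unfolding K_def
    by (rule emeasure_infdist_sublevel_le[OF cover ne _ _ that]) (use \<open>0 < C\<close> lam(2) in auto)
  show ?thesis
    unfolding mult.assoc using \<open>0 < K\<close> bound by blast
qed

end
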